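(* Let $\mathcal{F}$ be a finite set of graphs, $T\ge0$, and let $(G_1,y_1),\dots,(G_s,y_s)\in\mathcal{G}_n\times\{0,1\}$ be a sample (with both labels occurring) such that $(\phi^{(T)}_{\mathsf{WLOA}}(G_i),y_i)_{i\le s}$ is linearly separable with margin $\gamma$. If $$\min_{y_i\ne y_j}\Big(\big\|\phi^{(T)}_{\mathsf{WLOA},\mathcal{F}}(G_i)-\phi^{(T)}_{\mathsf{WLOA},\mathcal{F}}(G_j)\big\|^2-\big\|\phi^{(T)}_{\mathsf{WLOA}}(G_i)-\phi^{(T)}_{\mathsf{WLOA}}(G_j)\big\|^2\Big)>\max_{y_i=y_j}\Big(\big\|\phi^{(T)}_{\mathsf{WLOA},\mathcal{F}}(G_i)-\phi^{(T)}_{\mathsf{WLOA},\mathcal{F}}(G_j)\big\|^2-\big\|\phi^{(T)}_{\mathsf{WLOA}}(G_i)-\phi^{(T)}_{\mathsf{WLOA}}(G_j)\big\|^2\Big),$$ then the margin $\lambda$ of the sample $(\phi^{(T)}_{\mathsf{WLOA},\mathcal{F}}(G_i),y_i)_{i\le s}$ satisfies $\lambda>\gamma$.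
   Context: $\mathcal{G}_n$ is the set of (unlabeled, simple, undirected) graphs on $n$ vertices. $1$-WL: $C^1_0$ constant, $C^1_t(v)=\mathsf{RELABEL}(C^1_{t-1}(v),\{\!\{C^1_{t-1}(u):u\in N(v)\}\!\})$ with a fixed injective $\mathsf{RELABEL}$ shared by all graphs. $1$-WL$_{\mathcal{F}}$: same update with initial colour $(\ell_F(v))_{F\in\mathcal{F}}$, $\ell_F(v)=1$ if $v$ lies in a vertex set $X$ with induced subgraph $G[X]$ isomorphic to $F$, else $0$. With $\phi_t(G)_c$ (resp. $\phi_{\mathcal{F},t}(G)_c$) the number of vertices of $G$ of colour $c$ at round $t$, $\phi^{(T)}_{\mathsf{WLOA}}(G)$ is the $0/1$ vector with one coordinate per $(t,c,j)$ ($t\le T$, $c$ a round-$t$ colour, $j\in\{1,\dots,n\}$) equal to $1$ iff $\phi_t(G)_c\ge j$; $\phi^{(T)}_{\mathsf{WLOA},\mathcal{F}}$ likewise from the $1$-WL$_{\mathcal{F}}$ counts. The margin of a linearly separable labelled sample is half the Euclidean distance between the convex hulls of the two classes (the hard-margin SVM margin). *)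

theory Defs
  imports Complex_Main "HOL-Library.Multiset"
begin

text \<open>Simple undirected graphs with vertex set {0..<n}, given by an edge relation.
  Unlabelled graphs are represented by labelled representatives; all notions below are
  isomorphism invariant.\<close>

type_synonym rel = "nat \<Rightarrow> nat \<Rightarrow> bool"

definition graph_on :: "nat \<Rightarrow> rel \<Rightarrow> bool" where
  "graph_on n E \<longleftrightarrow> (\<forall>u v. E u v \<longrightarrow> u < n \<and> v < n) \<and> (\<forall>u v. E u v \<longrightarrow> E v u) \<and> (\<forall>v. \<not> E v v)"

text \<open>A pattern graph: number of vertices k and edge relation on {0..<k}.\<close>
type_synonym pattern = "nat \<times> rel"

definition induced_iso :: "pattern \<Rightarrow> rel \<Rightarrow> nat set \<Rightarrow> bool" where
  "induced_iso F E X \<longleftrightarrow> (\<exists>f. bij_betw f {0..<fst F} X \<and>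
      (\<forall>a<fst F. \<forall>b<fst F. snd F a b \<longleftrightarrow> E (f a) (f b)))"

definition ell :: "pattern \<Rightarrow> nat \<Rightarrow> rel \<Rightarrow> nat \<Rightarrow> bool" where
  "ell F n E v \<longleftrightarrow> (\<exists>X. X \<subseteq> {0..<n} \<and> v \<in> X \<and> induced_iso F E X)"

text \<open>WL colours; the injective RELABEL is the free constructor Step.\<close>
datatype 'a wlcol = Init 'a | Step "'a wlcol" "'a wlcol multiset"

fun wl :: "(nat \<Rightarrow> 'a) \<Rightarrow> nat \<Rightarrow> rel \<Rightarrow> nat \<Rightarrow> nat \<Rightarrow> 'a wlcol" where
  "wl init n E 0 v = Init (init v)"
| "wl init n E (Suc t) v =
     Step (wl init n E t v) (image_mset (wl init n E t) (mset_set {u. u < n \<and> E v u}))"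

text \<open>Initial colourings: constant for 1-WL; (\<ell>_F(v))_{F\<in>\<F>} (encoded as the set of F
  with \<ell>_F(v)=1) for 1-WL_\<F>.\<close>
definition init_plain :: "nat \<Rightarrow> rel \<Rightarrow> nat \<Rightarrow> unit" where
  "init_plain n E v = ()"

definition init_F :: "pattern set \<Rightarrow> nat \<Rightarrow> rel \<Rightarrow> nat \<Rightarrow> pattern set" where
  "init_F \<F> n E v = {F \<in> \<F>. ell F n E v}"

definition colour_count :: "(nat \<Rightarrow> rel \<Rightarrow> nat \<Rightarrow> 'a) \<Rightarrow> nat \<Rightarrow> rel \<Rightarrow> nat \<Rightarrow> 'a wlcol \<Rightarrow> nat" where
  "colour_count initf n E t c = card {v. v < n \<and> wl (initf n E) n E t v = c}"

definition coords :: "(nat \<Rightarrow> rel \<Rightarrow> nat \<Rightarrow> 'a) \<Rightarrow> nat \<Rightarrow> nat \<Rightarrow> (nat \<times> 'a wlcol \<times> nat) set" where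
  "coords initf n T = {(t, c, j). t \<le> T \<and>
      (\<exists>E v. graph_on n E \<and> v < n \<and> c = wl (initf n E) n E t v) \<and> 1 \<le> j \<and> j \<le> n}"

definition phi_WLOA :: "(nat \<Rightarrow> rel \<Rightarrow> nat \<Rightarrow> 'a) \<Rightarrow> nat \<Rightarrow> nat \<Rightarrow> rel \<Rightarrow> (nat \<times> 'a wlcol \<times> nat) \<Rightarrow> real" where
  "phi_WLOA initf n T E = (\<lambda>(t, c, j). if colour_count initf n E t c \<ge> j then 1 else 0)"

definition sqdist :: "'k set \<Rightarrow> ('k \<Rightarrow> real) \<Rightarrow> ('k \<Rightarrow> real) \<Rightarrow> real" where
  "sqdist I p q = (\<Sum>k\<in>I. (p k - q k)^2)"

definition edist :: "'k set \<Rightarrow> ('k \<Rightarrow> real) \<Rightarrow> ('k \<Rightarrow> real) \<Rightarrow> real" where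
  "edist I p q = sqrt (sqdist I p q)"

definition class_hull :: "nat \<Rightarrow> (nat \<Rightarrow> 'k \<Rightarrow> real) \<Rightarrow> (nat \<Rightarrow> bool) \<Rightarrow> bool \<Rightarrow> ('k \<Rightarrow> real) set" where
  "class_hull s x y b = {(\<lambda>k. \<Sum>i\<in>{i. i < s \<and> y i = b}. a i * x i k) | a.
      (\<forall>i. 0 \<le> a i) \<and> (\<Sum>i\<in>{i. i < s \<and> y i = b}. a i) = 1}"

definition lin_separable :: "'k set \<Rightarrow> nat \<Rightarrow> (nat \<Rightarrow> 'k \<Rightarrow> real) \<Rightarrow> (nat \<Rightarrow> bool) \<Rightarrow> bool" where
  "lin_separable I s x y \<longleftrightarrow> (\<exists>w b. \<forall>i<s.
      (y i \<longrightarrow> (\<Sum>k\<in>I. w k * x i k) + b > 0) \<and> (\<not> y i \<longrightarrow> (\<Sum>k\<in>I. w k * x i k) + b < 0))"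

definition margin :: "'k set \<Rightarrow> nat \<Rightarrow> (nat \<Rightarrow> 'k \<Rightarrow> real) \<Rightarrow> (nat \<Rightarrow> bool) \<Rightarrow> real" where
  "margin I s x y = Inf {edist I p q | p q. p \<in> class_hull s x y True \<and> q \<in> class_hull s x y False} / 2"

end

theory Submission
  imports Defs
begin

text \<open>For convex weights a on one class and b on the other, the squared distance between the
  two weighted means equals \<open>\<Sum>\<Sum> a i * b j * d i j\<close> minus half of each within-class sum
  \<open>\<Sum>\<Sum> a i * a i' * d i i'\<close> and \<open>\<Sum>\<Sum> b j * b j' * d j j'\<close>, where d is the pairwise
  squared distance. Applying this to both feature maps with the same weights, the squared
  distance between corresponding hull points grows by a convex combination of between-class
  increments (each at least the Min) minus within-class ones (each at most the Max), hence by at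
  least \<open>Min - Max > 0\<close>. So every distance between the hulls for the refined features is at
  least \<open>sqrt (g\<^sup>2 + (Min - Max))\<close>, with g the original infimum.\<close>

lemma sum_products_sq_diff:
  fixes a b u :: "'i \<Rightarrow> real"
  shows "(\<Sum>i\<in>A. \<Sum>j\<in>B. a i * b j * (u i - u j)^2)
     = (\<Sum>i\<in>A. a i * (u i)^2) * sum b B + sum a A * (\<Sum>j\<in>B. b j * (u j)^2)
       - 2 * (\<Sum>i\<in>A. a i * u i) * (\<Sum>j\<in>B. b j * u j)"
  by (simp add: power2_diff algebra_simps sum.distrib sum_subtractf sum_distrib_left sum_distrib_right)
     (rule sum.swap)

lemma sq_diff_weighted_means:
  fixes a b u :: "'i \<Rightarrow> real"
  assumes "sum a A = 1" "sum b B = 1"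
  shows "((\<Sum>i\<in>A. a i * u i) - (\<Sum>j\<in>B. b j * u j))^2
    = (\<Sum>i\<in>A. \<Sum>j\<in>B. a i * b j * (u i - u j)^2)
      - (\<Sum>i\<in>A. \<Sum>i'\<in>A. a i * a i' * (u i - u i')^2) / 2
      - (\<Sum>j\<in>B. \<Sum>j'\<in>B. b j * b j' * (u j - u j')^2) / 2"
  unfolding sum_products_sq_diff assms
  by (simp only: power2_eq_square mult_1_left mult_1_right) algebra

lemma sum_sum_sum_swap:
  "(\<Sum>k\<in>K. \<Sum>i\<in>A. \<Sum>j\<in>B. f i j k) = (\<Sum>i\<in>A. \<Sum>j\<in>B. \<Sum>k\<in>K. (f i j k :: 'a::comm_monoid_add))"
  by (subst sum.swap) (simp add: sum.swap[of _ K])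

lemma sqdist_weighted_means:
  fixes a b :: "'i \<Rightarrow> real" and x :: "'i \<Rightarrow> 'k \<Rightarrow> real"
  assumes "sum a A = 1" "sum b B = 1"
  shows "sqdist I (\<lambda>k. \<Sum>i\<in>A. a i * x i k) (\<lambda>k. \<Sum>j\<in>B. b j * x j k)
    = (\<Sum>i\<in>A. \<Sum>j\<in>B. a i * b j * sqdist I (x i) (x j))
      - (\<Sum>i\<in>A. \<Sum>i'\<in>A. a i * a i' * sqdist I (x i) (x i')) / 2
      - (\<Sum>j\<in>B. \<Sum>j'\<in>B. b j * b j' * sqdist I (x j) (x j')) / 2"
proof -
  have swap: "(\<Sum>k\<in>I. \<Sum>i\<in>C. \<Sum>j\<in>D. c i * d j * (x i k - x j k)^2)
     = (\<Sum>i\<in>C. \<Sum>j\<in>D. c i * d j * (\<Sum>k\<in>I. (x i k - x j k)^2))" for c d :: "'i \<Rightarrow> real" and C D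
    by (subst sum_sum_sum_swap) (simp only: sum_distrib_left)
  show ?thesis
    unfolding sqdist_def sq_diff_weighted_means[OF assms]
    by (simp only: sum_subtractf sum_divide_distrib[symmetric] swap)
qed

lemma weighted_double_sum_const:
  fixes a b :: "'i \<Rightarrow> real"
  assumes "sum a A = 1" "sum b B = 1"
  shows "(\<Sum>i\<in>A. \<Sum>j\<in>B. a i * b j * c) = c"
  using assms by (simp add: sum_distrib_left[symmetric] sum_distrib_right[symmetric])

lemma weighted_double_sum_mono:
  fixes a b :: "'i \<Rightarrow> real" and f g :: "'i \<Rightarrow> 'i \<Rightarrow> real"
  assumes "\<And>i j. i \<in> A \<Longrightarrow> j \<in> B \<Longrightarrow> f i j \<le> g i j" "\<forall>i. 0 \<le> a i" "\<forall>j. 0 \<le> b j"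
  shows "(\<Sum>i\<in>A. \<Sum>j\<in>B. a i * b j * f i j) \<le> (\<Sum>i\<in>A. \<Sum>j\<in>B. a i * b j * g i j)"
  using assms by (intro sum_mono mult_left_mono) auto

lemma sqdist_weighted_means_gain:
  fixes I :: "'k set" and I' :: "'l set"
    and x :: "'i \<Rightarrow> 'k \<Rightarrow> real" and x' :: "'i \<Rightarrow> 'l \<Rightarrow> real"
  defines "\<Delta> i j \<equiv> sqdist I' (x' i) (x' j) - sqdist I (x i) (x j)"
  assumes between: "\<And>i j. i \<in> A \<Longrightarrow> j \<in> B \<Longrightarrow> L \<le> \<Delta> i j"
    and within_A: "\<And>i j. i \<in> A \<Longrightarrow> j \<in> A \<Longrightarrow> \<Delta> i j \<le> U"
    and within_B: "\<And>i j. i \<in> B \<Longrightarrow> j \<in> B \<Longrightarrow> \<Delta> i j \<le> U"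
    and a: "\<forall>i. 0 \<le> a i" "sum a A = 1" and b: "\<forall>j. 0 \<le> b j" "sum b B = 1"
  shows "sqdist I (\<lambda>k. \<Sum>i\<in>A. a i * x i k) (\<lambda>k. \<Sum>j\<in>B. b j * x j k) + (L - U)
    \<le> sqdist I' (\<lambda>k. \<Sum>i\<in>A. a i * x' i k) (\<lambda>k. \<Sum>j\<in>B. b j * x' j k)"
proof -
  have "L \<le> (\<Sum>i\<in>A. \<Sum>j\<in>B. a i * b j * \<Delta> i j)"
    using weighted_double_sum_mono[of A B "\<lambda>_ _. L" \<Delta> a b] between a b
    by (simp add: weighted_double_sum_const[OF a(2) b(2)])
  moreover have "(\<Sum>i\<in>A. \<Sum>i'\<in>A. a i * a i' * \<Delta> i i') \<le> U"
    using weighted_double_sum_mono[of A A \<Delta> "\<lambda>_ _. U" a a] within_A a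
    by (simp add: weighted_double_sum_const[OF a(2) a(2)])
  moreover have "(\<Sum>j\<in>B. \<Sum>j'\<in>B. b j * b j' * \<Delta> j j') \<le> U"
    using weighted_double_sum_mono[of B B \<Delta> "\<lambda>_ _. U" b b] within_B b
    by (simp add: weighted_double_sum_const[OF b(2) b(2)])
  ultimately show ?thesis
    unfolding sqdist_weighted_means[OF a(2) b(2)] \<Delta>_def
    by (simp add: right_diff_distrib sum_subtractf diff_divide_distrib)
qed

lemma Inf_less_Inf_if_sq_gap:
  fixes S S' :: "real set"
  assumes "S' \<noteq> {}" "\<forall>z\<in>S. 0 \<le> z" "\<forall>z'\<in>S'. 0 \<le> z'" "0 < d"
    and gap: "\<And>z'. z' \<in> S' \<Longrightarrow> \<exists>z\<in>S. z^2 + d \<le> z'^2"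
  shows "Inf S < Inf S'"
proof -
  have "S \<noteq> {}" using assms(1) gap by blast
  then have g_nonneg: "0 \<le> Inf S" using assms(2) by (intro cInf_greatest) auto
  have "sqrt ((Inf S)^2 + d) \<le> z'" if "z' \<in> S'" for z'
  proof -
    obtain z where "z \<in> S" "z^2 + d \<le> z'^2" using gap \<open>z' \<in> S'\<close> by blast
    moreover have "Inf S \<le> z" using \<open>z \<in> S\<close> assms(2) by (intro cInf_lower bdd_belowI) auto
    ultimately have "(Inf S)^2 + d \<le> z'^2" using g_nonneg power_mono[of "Inf S" z 2] by linarith
    then show ?thesis using assms(3) that real_sqrt_le_mono by fastforce
  qed
  then have "sqrt ((Inf S)^2 + d) \<le> Inf S'" using assms(1) by (intro cInf_greatest) auto
  moreover have "Inf S < sqrt ((Inf S)^2 + d)"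
    using g_nonneg \<open>0 < d\<close> real_sqrt_less_mono[of "(Inf S)^2" "(Inf S)^2 + d"] by simp
  ultimately show ?thesis by linarith
qed

lemma edist_nonneg: "0 \<le> edist I p q"
  unfolding edist_def sqdist_def by (simp add: sum_nonneg)

lemma edist_sq: "(edist I p q)^2 = sqdist I p q"
  unfolding edist_def sqdist_def by (simp add: sum_nonneg)

lemma class_hull_nonempty:
  assumes "i < s" "y i = b"
  shows "class_hull s x y b \<noteq> {}"
proof -
  let ?a = "\<lambda>j. if j = i then 1 else 0 :: real"
  have "sum ?a {j. j < s \<and> y j = b} = 1" using assms by simp
  then show ?thesis unfolding class_hull_def by (auto intro!: exI[of _ ?a])
qed

lemma margin_less_margin:
  fixes I :: "'k set" and I' :: "'l set"
    and x :: "nat \<Rightarrow> 'k \<Rightarrow> real" and x' :: "nat \<Rightarrow> 'l \<Rightarrow> real"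
  assumes "\<exists>i<s. y i" "\<exists>i<s. \<not> y i"
    and between: "\<And>i j. i < s \<Longrightarrow> j < s \<Longrightarrow> y i \<noteq> y j
        \<Longrightarrow> L \<le> sqdist I' (x' i) (x' j) - sqdist I (x i) (x j)"
    and within: "\<And>i j. i < s \<Longrightarrow> j < s \<Longrightarrow> y i = y j
        \<Longrightarrow> sqdist I' (x' i) (x' j) - sqdist I (x i) (x j) \<le> U"
    and "U < L"
  shows "margin I s x y < margin I' s x' y"
proof -
  define C where "C b = {i. i < s \<and> y i = b}" for b
  have hull: "class_hull s z y b = {(\<lambda>k. \<Sum>i\<in>C b. a i * z i k) | a. (\<forall>i. 0 \<le> a i) \<and> sum a (C b) = 1}"
    for b and z :: "nat \<Rightarrow> 'm \<Rightarrow> real"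
    unfolding class_hull_def C_def ..
  define S where "S = {edist I p q | p q. p \<in> class_hull s x y True \<and> q \<in> class_hull s x y False}"
  define S' where "S' = {edist I' p q | p q. p \<in> class_hull s x' y True \<and> q \<in> class_hull s x' y False}"
  have "\<forall>z\<in>S. 0 \<le> z" "\<forall>z\<in>S'. 0 \<le> z" unfolding S_def S'_def using edist_nonneg by auto
  moreover have "S' \<noteq> {}"
  proof -
    obtain p q where "p \<in> class_hull s x' y True" "q \<in> class_hull s x' y False"
      using assms(1,2) class_hull_nonempty by (metis ex_in_conv)
    then show ?thesis unfolding S'_def by blast
  qed
  moreover have "\<exists>z\<in>S. z^2 + (L - U) \<le> z'^2" if "z' \<in> S'" for z'
  proof -
    obtain a b where a: "\<forall>i. 0 \<le> a i" "sum a (C True) = 1" and b: "\<forall>j. 0 \<le> b j" "sum b (C False) = 1"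
      and z': "z' = edist I' (\<lambda>k. \<Sum>i\<in>C True. a i * x' i k) (\<lambda>k. \<Sum>j\<in>C False. b j * x' j k)"
      using \<open>z' \<in> S'\<close> unfolding S'_def hull by blast
    let ?z = "edist I (\<lambda>k. \<Sum>i\<in>C True. a i * x i k) (\<lambda>k. \<Sum>j\<in>C False. b j * x j k)"
    have "?z \<in> S" unfolding S_def hull using a b by blast
    moreover have "?z^2 + (L - U) \<le> z'^2"
      unfolding z' edist_sq
      by (rule sqdist_weighted_means_gain[OF _ _ _ a b]) (auto simp: C_def intro: between within)
    ultimately show ?thesis by blast
  qed
  ultimately have "Inf S < Inf S'"
    using \<open>U < L\<close> Inf_less_Inf_if_sq_gap[of S' S "L - U"] by simp
  then show ?thesis unfolding margin_def S_def S'_def by simp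
qed

lemma finite_image_pairs_less: "finite {f i j | i j. i < (s::nat) \<and> j < s \<and> P i j}"
  by (rule finite_subset[of _ "(\<lambda>(i, j). f i j) ` ({..<s} \<times> {..<s})"]) auto

theorem theorem17:
  fixes \<F> :: "pattern set" and T n s :: nat and G :: "nat \<Rightarrow> rel" and y :: "nat \<Rightarrow> bool"
    and \<gamma> :: real
  assumes "finite \<F>" and "\<forall>F\<in>\<F>. graph_on (fst F) (snd F)"
    and "\<forall>i<s. graph_on n (G i)"
    and "\<exists>i<s. y i" and "\<exists>i<s. \<not> y i"
    and "lin_separable (coords init_plain n T) s (\<lambda>i. phi_WLOA init_plain n T (G i)) y"
    and "\<gamma> = margin (coords init_plain n T) s (\<lambda>i. phi_WLOA init_plain n T (G i)) y"
    and "Min {sqdist (coords (init_F \<F>) n T) (phi_WLOA (init_F \<F>) n T (G i)) (phi_WLOA (init_F \<F>) n T (G j))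
              - sqdist (coords init_plain n T) (phi_WLOA init_plain n T (G i)) (phi_WLOA init_plain n T (G j))
            | i j. i < s \<and> j < s \<and> y i \<noteq> y j}
       > Max {sqdist (coords (init_F \<F>) n T) (phi_WLOA (init_F \<F>) n T (G i)) (phi_WLOA (init_F \<F>) n T (G j))
              - sqdist (coords init_plain n T) (phi_WLOA init_plain n T (G i)) (phi_WLOA init_plain n T (G j))
            | i j. i < s \<and> j < s \<and> y i = y j}"
  shows "margin (coords (init_F \<F>) n T) s (\<lambda>i. phi_WLOA (init_F \<F>) n T (G i)) y > \<gamma>"
  unfolding assms(7)
  by (rule margin_less_margin[OF assms(4,5) _ _ assms(8)])
     (auto intro!: Min_le Max_ge finite_image_pairs_less)

end
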